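(* Let $m>1$, $D>0$, $r\ge0$, $c>0$. Let $d\in C^2([0,+\infty))$ with $d(0)=0$, $d'(s)>0$, $d''(s)\ge0$ for $s>0$. Let $b:[0,+\infty)\to[0,+\infty)$ be continuous and suppose there are $0<\zeta_1<\zeta_2$ such that: (1) $b([\zeta_1,\zeta_2])\subseteq[d(\zeta_1),d(\zeta_2)]$ and $b([0,\zeta_1])\subseteq[0,d(\zeta_2)]$; (2) $\min_{s\in[\zeta_1,\zeta_2]}b(s)=b(\zeta_1)$; (3) $b(s)>d(s)$ for $s\in(0,\zeta_1]$, and $b$ is differentiable at $0$ with $b'(0)>d'(0)$; (4) in $[0,\zeta_2]$ the equation $b(s)=d(s)$ has exactly two solutions, $0$ and $\kappa$; and additionally $\sup_{s\ge0}b(s)\le d(\zeta_2)$. Then every non-trivial wave solution $\phi$ (semi-wavefront or wavefront) of $$c\phi'(t)=D(\phi^m)''(t)-d(\phi(t))+b(\phi(t-cr)),\qquad t\in\mathbb R,$$ satisfies $$0<\zeta_1\le\liminf_{t\to+\infty}\phi(t)\le\limsup_{t\to+\infty}\phi(t)\le\zeta_2<+\infty.$$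
   Context: Definitions: a function $0\le\phi\in W^{1,1}_{\rm loc}(\mathbb R)\cap L^\infty(\mathbb R)$ with $\phi^m\in W^{1,1}_{\rm loc}(\mathbb R)$ is a semi-wavefront (of speed $c$) if (i) it satisfies the equation in the sense of distributions; (ii) $\phi(-\infty)=0$ and $0<\liminf_{t\to+\infty}\phi\le\limsup_{t\to+\infty}\phi<+\infty$; (iii) there is a maximal interval $(-\infty,t_0)$, $t_0\in(-\infty,+\infty]$, on which $\phi$ is monotonically increasing, and if $t_0<+\infty$ then $\phi(t_0)>\kappa$. A wavefront is a semi-wavefront with $\phi(+\infty)=\kappa$. (These conditions (1)–(4) hold e.g. when $b\in C^1$ is unimodal with unique maximum point $s_M<\kappa$, $M=b(s_M)$, $\zeta_2=d^{-1}(M)$, $\zeta_1\in(0,s_M)$ with $b(\zeta_1)=b(\zeta_2)$, $b(0)=0$, $b(\kappa)=d(\kappa)$, $b'(0)>d'(0)$, $b'(\kappa)<d'(\kappa)$, $d<b\le b'(0)s$ on $(0,\kappa)$.) *)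

theory Defs
  imports "HOL-Analysis.Analysis"
begin

definition smooth_fun :: "(real \<Rightarrow> real) \<Rightarrow> bool" where
  "smooth_fun \<psi> \<longleftrightarrow> (\<forall>k::nat. \<forall>t. ((deriv ^^ k) \<psi>) differentiable (at t))"

definition test_fun :: "(real \<Rightarrow> real) \<Rightarrow> bool" where
  "test_fun \<psi> \<longleftrightarrow> smooth_fun \<psi> \<and> (\<exists>K. compact K \<and> (\<forall>t. t \<notin> K \<longrightarrow> \<psi> t = 0))"

definition loc_integrable :: "(real \<Rightarrow> real) \<Rightarrow> bool" where
  "loc_integrable f \<longleftrightarrow> (\<forall>a b. set_integrable lborel {a..b} f)"

definition W11_loc :: "(real \<Rightarrow> real) \<Rightarrow> bool" where
  "W11_loc f \<longleftrightarrow> loc_integrable f \<and>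
     (\<exists>g. loc_integrable g \<and>
        (\<forall>\<psi>. test_fun \<psi> \<longrightarrow>
           (LINT t|lborel. f t * deriv \<psi> t) = - (LINT t|lborel. g t * \<psi> t)))"

definition solves_eq ::
  "real \<Rightarrow> real \<Rightarrow> real \<Rightarrow> real \<Rightarrow> (real \<Rightarrow> real) \<Rightarrow> (real \<Rightarrow> real) \<Rightarrow> (real \<Rightarrow> real) \<Rightarrow> bool" where
  "solves_eq m D r c d b \<phi> \<longleftrightarrow>
     (\<forall>\<psi>. test_fun \<psi> \<longrightarrow>
        - c * (LINT t|lborel. \<phi> t * deriv \<psi> t)
        = D * (LINT t|lborel. (\<phi> t powr m) * deriv (deriv \<psi>) t)
          - (LINT t|lborel. d (\<phi> t) * \<psi> t)
          + (LINT t|lborel. b (\<phi> (t - c * r)) * \<psi> t))"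

text \<open>Semi-wavefront of speed c (phi is taken to be the continuous representative).\<close>
definition semi_wavefront ::
  "real \<Rightarrow> real \<Rightarrow> real \<Rightarrow> real \<Rightarrow> (real \<Rightarrow> real) \<Rightarrow> (real \<Rightarrow> real) \<Rightarrow> real \<Rightarrow> (real \<Rightarrow> real) \<Rightarrow> bool" where
  "semi_wavefront m D r c d b \<kappa> \<phi> \<longleftrightarrow>
     (\<forall>t. 0 \<le> \<phi> t) \<and> continuous_on UNIV \<phi> \<and> W11_loc \<phi> \<and> bounded (range \<phi>) \<and>
     W11_loc (\<lambda>t. \<phi> t powr m) \<and>
     solves_eq m D r c d b \<phi> \<and>
     (\<phi> \<longlongrightarrow> 0) at_bot \<and>
     0 < Liminf at_top (\<lambda>t. ereal (\<phi> t)) \<and>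
     Liminf at_top (\<lambda>t. ereal (\<phi> t)) \<le> Limsup at_top (\<lambda>t. ereal (\<phi> t)) \<and>
     Limsup at_top (\<lambda>t. ereal (\<phi> t)) < \<infinity> \<and>
     (\<exists>t0::ereal.
        mono_on {t. ereal t < t0} \<phi> \<and>
        (\<forall>t1. t0 < t1 \<longrightarrow> \<not> mono_on {t. ereal t < t1} \<phi>) \<and>
        (\<forall>s. t0 = ereal s \<longrightarrow> \<phi> s > \<kappa>))"

definition wavefront ::
  "real \<Rightarrow> real \<Rightarrow> real \<Rightarrow> real \<Rightarrow> (real \<Rightarrow> real) \<Rightarrow> (real \<Rightarrow> real) \<Rightarrow> real \<Rightarrow> (real \<Rightarrow> real) \<Rightarrow> bool" where
  "wavefront m D r c d b \<kappa> \<phi> \<longleftrightarrow> semi_wavefront m D r c d b \<kappa> \<phi> \<and> (\<phi> \<longlongrightarrow> \<kappa>) at_top"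

end

theory Submission
  imports Defs "HOL-Computational_Algebra.Polynomial"
begin

(* Testing the equation against smooth compactly supported functions and integrating twice
   (du Bois-Reymond) turns it into the first order system u = phi^m, D u' = w + c phi, w' = h,
   where h(t) = d(phi(t)) - b(phi(t - c r)) is the net reaction.  As u increases with phi, h cannot
   be positive at an interior maximum of phi: otherwise w increases through it, so D u' < 0 just
   before it and u, hence phi, was larger there.  Symmetrically h cannot be negative at an
   interior minimum.  And h cannot stay above a positive constant forever, since then w, u' and u
   would grow without bound.
   If limsup phi > zeta2, choose l in between: since b <= d(zeta2), h >= d(l) - d(zeta2) > 0
   whenever phi >= l, so phi can neither stay above l nor keep crossing it.  If liminf phi = mu <
   zeta1, then (2), (3) and continuity give b(s) > d(x) + eps for all s in the eventual range of
   the delayed argument and x near mu, and the same dichotomy at a level slightly above mu gives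
   a contradiction. *)

section \<open>Smooth functions as towers of derivatives\<close>

definition deriv_tower :: "(nat \<Rightarrow> real \<Rightarrow> real) \<Rightarrow> bool" where
  "deriv_tower F \<longleftrightarrow> (\<forall>k t. (F k has_real_derivative F (Suc k) t) (at t))"

lemma deriv_towerD: "deriv_tower F \<Longrightarrow> (F k has_real_derivative F (Suc k) t) (at t)"
  unfolding deriv_tower_def by blast

lemma deriv_tower_continuous_on: "deriv_tower F \<Longrightarrow> continuous_on S (F k)"
  by (meson DERIV_isCont continuous_at_imp_continuous_on deriv_towerD)

lemma higher_deriv_tower: "deriv_tower F \<Longrightarrow> (deriv ^^ k) (F 0) = F k"
proof (induction k)
  case (Suc k)
  then show ?case using deriv_towerD[OF Suc.prems] by (auto intro!: DERIV_imp_deriv)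
qed simp

lemma deriv_tower_smooth_fun: "deriv_tower F \<Longrightarrow> smooth_fun (F 0)"
  unfolding smooth_fun_def using higher_deriv_tower deriv_towerD real_differentiable_def by metis

lemma deriv_tower_lincomb:
  "deriv_tower F \<Longrightarrow> deriv_tower G \<Longrightarrow> deriv_tower (\<lambda>k t. x * F k t + y * G k t)"
  unfolding deriv_tower_def by (auto intro!: derivative_eq_intros)

lemma deriv_tower_affine_comp:
  assumes "deriv_tower F"
  shows "deriv_tower (\<lambda>k t. \<alpha> ^ k * F k (\<alpha> * t + \<beta>))"
  unfolding deriv_tower_def
proof (intro allI)
  fix k t
  have "((\<lambda>t. F k (\<alpha> * t + \<beta>)) has_real_derivative F (Suc k) (\<alpha> * t + \<beta>) * \<alpha>) (at t)"
    by (rule DERIV_chain2[OF deriv_towerD[OF assms]]) (auto intro!: derivative_eq_intros)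
  then show "((\<lambda>t. \<alpha> ^ k * F k (\<alpha> * t + \<beta>)) has_real_derivative
      \<alpha> ^ Suc k * F (Suc k) (\<alpha> * t + \<beta>)) (at t)"
    by (auto intro!: derivative_eq_intros simp: algebra_simps)
qed

lemma Leibniz_step:
  fixes a b :: "nat \<Rightarrow> real"
  shows "(\<Sum>i\<le>k. real (k choose i) * (a (Suc i) * b (k - i) + a i * b (Suc (k - i))))
      = (\<Sum>i\<le>Suc k. real (Suc k choose i) * a i * b (Suc k - i))"
proof -
  have "(\<Sum>i\<le>Suc k. real (Suc k choose i) * a i * b (Suc k - i))
      = a 0 * b (Suc k) + (\<Sum>i\<le>k. real (k choose i) * a (Suc i) * b (k - i))
        + (\<Sum>i\<le>k. real (k choose Suc i) * a (Suc i) * b (k - i))"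
    unfolding sum.atMost_Suc_shift by (simp add: sum.distrib algebra_simps)
  also have "(\<Sum>i\<le>k. real (k choose Suc i) * a (Suc i) * b (k - i))
      = (\<Sum>i\<le>k. real (k choose i) * a i * b (Suc (k - i))) - a 0 * b (Suc k)"
  proof -
    have "(\<Sum>i\<le>Suc k. real (k choose i) * a i * b (Suc k - i))
        = a 0 * b (Suc k) + (\<Sum>i\<le>k. real (k choose Suc i) * a (Suc i) * b (k - i))"
      unfolding sum.atMost_Suc_shift by simp
    moreover have "(\<Sum>i\<le>Suc k. real (k choose i) * a i * b (Suc k - i))
        = (\<Sum>i\<le>k. real (k choose i) * a i * b (Suc (k - i)))"
      by (auto simp: binomial_eq_0 Suc_diff_le intro!: sum.cong)
    ultimately show ?thesis by simp
  qed
  finally show ?thesis by (simp add: sum.distrib algebra_simps)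
qed

lemma deriv_tower_mult:
  assumes F: "deriv_tower F" and G: "deriv_tower G"
  shows "deriv_tower (\<lambda>k t. \<Sum>i\<le>k. real (k choose i) * F i t * G (k - i) t)"
  unfolding deriv_tower_def
proof (intro allI)
  fix k t
  have "((\<lambda>t. \<Sum>i\<le>k. real (k choose i) * F i t * G (k - i) t) has_real_derivative
      (\<Sum>i\<le>k. real (k choose i) * (F (Suc i) t * G (k - i) t + F i t * G (Suc (k - i)) t))) (at t)"
    by (auto intro!: DERIV_sum derivative_eq_intros deriv_towerD[OF F] deriv_towerD[OF G]
        simp: algebra_simps)
  also have "(\<Sum>i\<le>k. real (k choose i) * (F (Suc i) t * G (k - i) t + F i t * G (Suc (k - i)) t))
      = (\<Sum>i\<le>Suc k. real (Suc k choose i) * F i t * G (Suc k - i) t)"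
    by (rule Leibniz_step)
  finally show "((\<lambda>t. \<Sum>i\<le>k. real (k choose i) * F i t * G (k - i) t) has_real_derivative
      (\<Sum>i\<le>Suc k. real (Suc k choose i) * F i t * G (Suc k - i) t)) (at t)" .
qed

section \<open>A smooth bump function\<close>

lemma poly_div_exp_tendsto_0: "((\<lambda>y. poly p y / exp y) \<longlongrightarrow> 0) (at_top :: real filter)"
proof -
  have "((\<lambda>y. \<Sum>i\<le>degree p. coeff p i * (y ^ i / exp y)) \<longlongrightarrow> (\<Sum>i\<le>degree p. coeff p i * 0)) at_top"
    by (intro tendsto_sum tendsto_mult tendsto_const tendsto_power_div_exp_0)
  then show ?thesis by (simp add: poly_altdef sum_divide_distrib)
qed

definition exp_recip_poly :: "real poly \<Rightarrow> real \<Rightarrow> real" where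
  "exp_recip_poly p x = (if 0 < x then poly p (inverse x) * exp (- inverse x) else 0)"

(* (p(1/x) exp(-1/x))' = (1/x)^2 (p - p')(1/x) exp(-1/x) for x > 0 *)
definition exp_recip_step :: "real poly \<Rightarrow> real poly" where
  "exp_recip_step p = [:0, 0, 1:] * (p - pderiv p)"

lemma exp_recip_poly_deriv_pos:
  assumes "0 < x"
  shows "(exp_recip_poly p has_real_derivative exp_recip_poly (exp_recip_step p) x) (at x)"
proof -
  have "((\<lambda>x. poly p (inverse x)) has_real_derivative
      poly (pderiv p) (inverse x) * - (inverse x ^ 2)) (at x)"
    by (rule DERIV_chain2[OF poly_DERIV])
      (use assms in \<open>auto intro!: derivative_eq_intros simp: power2_eq_square\<close>)
  then have "((\<lambda>x. poly p (inverse x) * exp (- inverse x)) has_real_derivative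
      poly (pderiv p) (inverse x) * - (inverse x ^ 2) * exp (- inverse x)
      + poly p (inverse x) * (exp (- inverse x) * (inverse x ^ 2))) (at x)"
    using assms by (auto intro!: derivative_eq_intros simp: power2_eq_square)
  then have "((\<lambda>x. poly p (inverse x) * exp (- inverse x)) has_real_derivative
      exp_recip_poly (exp_recip_step p) x) (at x)"
    using assms
    by (simp add: exp_recip_poly_def exp_recip_step_def power2_eq_square algebra_simps)
  then show ?thesis
    by (rule has_field_derivative_transform_within_open[of _ _ _ "{0<..}"])
      (use assms in \<open>auto simp: exp_recip_poly_def\<close>)
qed

lemma exp_recip_poly_deriv_0: "(exp_recip_poly p has_real_derivative 0) (at 0)"
  unfolding has_field_derivative_iff
proof (rule filterlim_split_at)
  show "((\<lambda>h. (exp_recip_poly p h - exp_recip_poly p 0) / (h - 0)) \<longlongrightarrow> 0) (at_left 0)"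
    by (rule tendsto_eventually)
      (auto simp: eventually_at_left_field exp_recip_poly_def intro!: exI[of _ "-1"])
  have "((\<lambda>h. poly (pCons 0 p) (inverse h) / exp (inverse h)) \<longlongrightarrow> 0) (at_right 0)"
    by (rule filterlim_compose[OF poly_div_exp_tendsto_0 filterlim_inverse_at_top_right])
  then show "((\<lambda>h. (exp_recip_poly p h - exp_recip_poly p 0) / (h - 0)) \<longlongrightarrow> 0) (at_right 0)"
    by (rule tendsto_cong[THEN iffD1, rotated])
      (auto simp: eventually_at_right_field exp_recip_poly_def exp_minus field_simps
        intro!: exI[of _ 1])
qed

lemma exp_recip_poly_deriv:
  "(exp_recip_poly p has_real_derivative exp_recip_poly (exp_recip_step p) x) (at x)"
proof -
  consider "0 < x" | "x < 0" | "x = 0" by linarith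
  then show ?thesis
  proof cases
    case 1
    then show ?thesis by (rule exp_recip_poly_deriv_pos)
  next
    case 2
    have "(exp_recip_poly p has_real_derivative 0) (at x)"
      by (rule has_field_derivative_transform_within_open[of "\<lambda>_. 0" _ _ "{..<0}"])
        (use 2 in \<open>auto simp: exp_recip_poly_def\<close>)
    moreover have "exp_recip_poly (exp_recip_step p) x = 0"
      using 2 by (simp add: exp_recip_poly_def)
    ultimately show ?thesis by simp
  next
    case 3
    then show ?thesis using exp_recip_poly_deriv_0 by (simp add: exp_recip_poly_def)
  qed
qed

definition exp_recip_tower :: "nat \<Rightarrow> real \<Rightarrow> real" where
  "exp_recip_tower k = exp_recip_poly ((exp_recip_step ^^ k) 1)"

lemma deriv_tower_exp_recip: "deriv_tower exp_recip_tower"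
  unfolding deriv_tower_def exp_recip_tower_def by (simp add: exp_recip_poly_deriv)

lemma exp_recip_tower_0: "exp_recip_tower 0 x = (if 0 < x then exp (- inverse x) else 0)"
  by (simp add: exp_recip_tower_def exp_recip_poly_def)

text \<open>The Leibniz tower of \<open>t \<mapsto> e(1 + t) e(1 - t)\<close>, where \<open>e x = exp (-1/x)\<close> for \<open>x > 0\<close>.\<close>

definition bump :: "nat \<Rightarrow> real \<Rightarrow> real" where
  "bump k t = (\<Sum>i\<le>k. real (k choose i) * exp_recip_tower i (t + 1)
      * ((- 1) ^ (k - i) * exp_recip_tower (k - i) (1 - t)))"

lemma deriv_tower_bump: "deriv_tower bump"
proof -
  have "deriv_tower (\<lambda>k t. \<Sum>i\<le>k. real (k choose i) * (1 ^ i * exp_recip_tower i (1 * t + 1))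
      * ((- 1) ^ (k - i) * exp_recip_tower (k - i) ((- 1) * t + 1)))"
    by (intro deriv_tower_mult deriv_tower_affine_comp deriv_tower_exp_recip)
  then show ?thesis by (simp add: bump_def[abs_def])
qed

lemma bump_0: "bump 0 t = (if \<bar>t\<bar> < 1 then exp (- inverse (t + 1)) * exp (- inverse (1 - t)) else 0)"
  by (auto simp: bump_def exp_recip_tower_0)

lemma bump_0_nonneg: "0 \<le> bump 0 t"
  by (simp add: bump_0)

lemma bump_0_pos: "\<bar>t\<bar> < 1 \<Longrightarrow> 0 < bump 0 t"
  by (simp add: bump_0)

lemma bump_0_eq_0: "t \<notin> {-1..1} \<Longrightarrow> bump 0 t = 0"
  by (auto simp: bump_0)

definition test_tower :: "(nat \<Rightarrow> real \<Rightarrow> real) \<Rightarrow> bool" where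
  "test_tower F \<longleftrightarrow> deriv_tower F \<and> (\<exists>a b. \<forall>t. t \<notin> {a..b} \<longrightarrow> F 0 t = 0)"

lemma deriv_tower_vanishes:
  assumes F: "deriv_tower F" and F0: "\<And>t. t \<notin> {a..b} \<Longrightarrow> F 0 t = 0" and t: "t \<notin> {a..b}"
  shows "F k t = 0"
  using t
proof (induction k arbitrary: t)
  case (Suc k)
  have "(F k has_real_derivative 0) (at t)"
    by (rule has_field_derivative_transform_within_open[of "\<lambda>_. 0" _ _ "- {a..b}"])
      (use Suc in auto)
  with deriv_towerD[OF F] show ?case using DERIV_unique by blast
qed (use F0 in simp)

lemma test_tower_support:
  assumes "test_tower F"
  obtains a b where "a \<le> b" "\<And>k t. t \<notin> {a..b} \<Longrightarrow> F k t = 0"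
proof -
  obtain a b where F0: "\<And>t. t \<notin> {a..b} \<Longrightarrow> F 0 t = 0"
    using assms unfolding test_tower_def by blast
  have "F k t = 0" if "t \<notin> {min a b..max a b}" for k t
    by (rule deriv_tower_vanishes[of F a b]) (use assms F0 that in \<open>auto simp: test_tower_def\<close>)
  then show ?thesis using that[of "min a b" "max a b"] by simp
qed

lemma test_tower_test_fun:
  assumes "test_tower F"
  shows "test_fun (F 0)" "deriv (F 0) = F 1" "deriv (deriv (F 0)) = F 2"
proof -
  have F: "deriv_tower F" using assms by (simp add: test_tower_def)
  obtain a b where F0: "\<forall>t. t \<notin> {a..b} \<longrightarrow> F 0 t = 0"
    using assms unfolding test_tower_def by blast
  show "test_fun (F 0)"
    unfolding test_fun_def
  proof (intro conjI exI)
    show "smooth_fun (F 0)" by (rule deriv_tower_smooth_fun[OF F])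
    show "compact {a..b}" by simp
  qed (use F0 in simp)
  show "deriv (F 0) = F 1" using higher_deriv_tower[OF F, of 1] by simp
  show "deriv (deriv (F 0)) = F 2"
    using higher_deriv_tower[OF F, of 2] by (simp add: numeral_2_eq_2)
qed

lemma test_tower_lincomb:
  assumes F: "test_tower F" and G: "test_tower G"
  shows "test_tower (\<lambda>k t. x * F k t + y * G k t)"
proof -
  obtain a b where "a \<le> b" and Fab: "\<And>k t. t \<notin> {a..b} \<Longrightarrow> F k t = 0"
    using test_tower_support[OF F] by metis
  obtain a' b' where "a' \<le> b'" and Gab: "\<And>k t. t \<notin> {a'..b'} \<Longrightarrow> G k t = 0"
    using test_tower_support[OF G] by metis
  have "x * F 0 t + y * G 0 t = 0" if "t \<notin> {min a a'..max b b'}" for t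
  proof -
    from that have "t \<notin> {a..b}" "t \<notin> {a'..b'}" by auto
    then show ?thesis using Fab Gab by simp
  qed
  moreover have "deriv_tower (\<lambda>k t. x * F k t + y * G k t)"
    using F G by (simp add: test_tower_def deriv_tower_lincomb)
  ultimately show ?thesis unfolding test_tower_def by blast
qed

lemma lborel_integral_vanishing_outside_Icc:
  fixes f :: "real \<Rightarrow> real"
  assumes "continuous_on UNIV f" "\<And>t. t \<notin> {a..b} \<Longrightarrow> f t = 0"
  shows "integrable lborel f" "(LINT t|lborel. f t) = integral {a..b} f"
proof -
  have f: "f = (\<lambda>t. indicator {a..b} t *\<^sub>R f t)"
    using assms(2) by (auto simp: indicator_def fun_eq_iff)
  have "integrable lborel (\<lambda>t. indicator {a..b} t *\<^sub>R f t)"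
    by (rule borel_integrable_compact) (auto intro: continuous_on_subset[OF assms(1)])
  then show "integrable lborel f" using f by simp
  then have "set_integrable lborel {a..b} f"
    by (subst (asm) f) (simp add: set_integrable_def)
  then have "(LINT t:{a..b}|lborel. f t) = integral {a..b} f"
    by (rule set_borel_integral_eq_integral(2))
  then show "(LINT t|lborel. f t) = integral {a..b} f"
    by (subst f) (simp add: set_lebesgue_integral_def)
qed

lemma integrable_mult_test_tower:
  assumes "test_tower F" "continuous_on UNIV f"
  shows "integrable lborel (\<lambda>t. f t * F k t)"
proof -
  obtain a b where "a \<le> b" "\<And>k t. t \<notin> {a..b} \<Longrightarrow> F k t = 0"
    using test_tower_support[OF assms(1)] by metis
  moreover have "continuous_on UNIV (\<lambda>t. f t * F k t)"
    using assms by (intro continuous_on_mult assms(2) deriv_tower_continuous_on[of F])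
      (simp add: test_tower_def)
  ultimately show ?thesis by (intro lborel_integral_vanishing_outside_Icc(1)[of _ a b]) auto
qed

lemma integration_by_parts_vanishing:
  fixes P p Q q :: "real \<Rightarrow> real"
  assumes P: "\<And>t. (P has_real_derivative p t) (at t)" and Q: "\<And>t. (Q has_real_derivative q t) (at t)"
    and p: "continuous_on UNIV p" and q: "continuous_on UNIV q"
    and Q0: "\<And>t. t \<notin> {a..b} \<Longrightarrow> Q t = 0" and q0: "\<And>t. t \<notin> {a..b} \<Longrightarrow> q t = 0"
    and "a \<le> b"
  shows "(LINT t|lborel. p t * Q t) = - (LINT t|lborel. P t * q t)"
proof -
  have cP: "continuous_on UNIV P" and cQ: "continuous_on UNIV Q"
    using P Q by (meson DERIV_isCont continuous_at_imp_continuous_on)+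
  have pQ: "continuous_on UNIV (\<lambda>t. p t * Q t)" and Pq: "continuous_on UNIV (\<lambda>t. P t * q t)"
    by (intro continuous_intros p q cP cQ)+
  have "((\<lambda>t. p t * Q t + P t * q t) has_integral (P (b+1) * Q (b+1) - P (a-1) * Q (a-1))) {a-1..b+1}"
  proof (rule fundamental_theorem_of_calculus)
    fix t
    have "((\<lambda>t. P t * Q t) has_real_derivative p t * Q t + P t * q t) (at t)"
      by (auto intro!: derivative_eq_intros P Q)
    then show "((\<lambda>t. P t * Q t) has_vector_derivative p t * Q t + P t * q t) (at t within {a-1..b+1})"
      by (simp add: has_real_derivative_iff_has_vector_derivative[symmetric] has_field_derivative_at_within)
  qed (use \<open>a \<le> b\<close> in simp)
  then have "integral {a-1..b+1} (\<lambda>t. p t * Q t + P t * q t) = 0"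
    using Q0 by (simp add: integral_unique)
  moreover have "integral {a-1..b+1} (\<lambda>t. p t * Q t + P t * q t)
      = integral {a-1..b+1} (\<lambda>t. p t * Q t) + integral {a-1..b+1} (\<lambda>t. P t * q t)"
    by (intro integral_add integrable_continuous_real continuous_on_subset[OF pQ]
        continuous_on_subset[OF Pq]) simp_all
  moreover have "(LINT t|lborel. p t * Q t) = integral {a-1..b+1} (\<lambda>t. p t * Q t)"
    by (rule lborel_integral_vanishing_outside_Icc(2)[OF pQ]) (use Q0 in auto)
  moreover have "(LINT t|lborel. P t * q t) = integral {a-1..b+1} (\<lambda>t. P t * q t)"
    by (rule lborel_integral_vanishing_outside_Icc(2)[OF Pq]) (use q0 in auto)
  ultimately show ?thesis by linarith
qed

lemma integration_by_parts_test_tower: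
  assumes X: "test_tower X" and P: "\<And>t. (P has_real_derivative p t) (at t)"
    and p: "continuous_on UNIV p"
  shows "(LINT t|lborel. p t * X k t) = - (LINT t|lborel. P t * X (Suc k) t)"
proof -
  obtain a b where "a \<le> b" "\<And>k t. t \<notin> {a..b} \<Longrightarrow> X k t = 0"
    using test_tower_support[OF X] by metis
  moreover have X': "deriv_tower X" using X by (simp add: test_tower_def)
  ultimately show ?thesis
    by (intro integration_by_parts_vanishing[where Q = "X k" and q = "X (Suc k)" and a = a and b = b]
        P p deriv_towerD[OF X'] deriv_tower_continuous_on[OF X'])
qed

lemma continuous_has_antiderivative:
  fixes f :: "real \<Rightarrow> real"
  assumes "continuous_on UNIV f"
  obtains F where "\<And>t. (F has_real_derivative f t) (at t)"
  using einterval_antiderivative[of "-\<infinity>" "\<infinity>" f] assms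
  by (auto simp: has_real_derivative_iff_has_vector_derivative continuous_on_eq_continuous_at)

lemma test_tower_antiderivative:
  assumes X: "test_tower X" and mean0: "(LINT t|lborel. X 0 t) = 0"
  obtains Y where "test_tower Y" "\<And>k. Y (Suc k) = X k"
proof -
  have X': "deriv_tower X" using X by (simp add: test_tower_def)
  obtain a b where ab: "a \<le> b" "\<And>k t. t \<notin> {a..b} \<Longrightarrow> X k t = 0"
    using test_tower_support[OF X] by metis
  obtain G where G: "\<And>t. (G has_real_derivative X 0 t) (at t)"
    using continuous_has_antiderivative[OF deriv_tower_continuous_on[OF X', of UNIV 0]] by blast
  have G0: "(G has_real_derivative 0) (at t)" if "t \<notin> {a..b}" for t
    using G[of t] ab(2)[OF that, of 0] by simp
  have G_cont: "continuous_on S G" for S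
    using G by (meson DERIV_isCont continuous_at_imp_continuous_on)
  define Y where "Y k = (case k of 0 \<Rightarrow> (\<lambda>t. G t - G a) | Suc j \<Rightarrow> X j)" for k
  have "deriv_tower Y"
    unfolding deriv_tower_def
  proof (intro allI)
    fix k t show "(Y k has_real_derivative Y (Suc k) t) (at t)"
      using G deriv_towerD[OF X'] by (cases k) (auto simp: Y_def intro!: derivative_eq_intros)
  qed
  moreover have "G b = G a"
  proof -
    have "(X 0 has_integral (G b - G a)) {a..b}"
      by (rule fundamental_theorem_of_calculus[OF ab(1)])
        (use G in \<open>auto simp: has_real_derivative_iff_has_vector_derivative[symmetric]
          intro: has_field_derivative_at_within\<close>)
    moreover have "integral {a..b} (X 0) = 0"
      using lborel_integral_vanishing_outside_Icc(2)[OF deriv_tower_continuous_on[OF X'], of a b 0]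
        ab mean0 by simp
    ultimately show ?thesis by (simp add: integral_unique)
  qed
  moreover have "Y 0 t = 0" if "t \<notin> {a..b}" for t
  proof (cases "t < a")
    case True
    then have "G a = G t"
      by (intro DERIV_isconst_end[OF True G_cont]) (use G0 in auto)
    then show ?thesis by (simp add: Y_def)
  next
    case False
    with that have "b < t" by auto
    then have "G t = G b"
      by (intro DERIV_isconst_end G_cont) (use G0 in auto)
    with \<open>G b = G a\<close> show ?thesis by (simp add: Y_def)
  qed
  ultimately show ?thesis using that[of Y] by (auto simp: test_tower_def Y_def)
qed

definition bump_at :: "real \<Rightarrow> real \<Rightarrow> nat \<Rightarrow> real \<Rightarrow> real" where
  "bump_at t0 \<delta> k t = (1 / \<delta>) ^ k * bump k ((t - t0) / \<delta>)"

lemma bump_at_0_eq_0: "0 < \<delta> \<Longrightarrow> t \<notin> {t0 - \<delta>..t0 + \<delta>} \<Longrightarrow> bump_at t0 \<delta> 0 t = 0"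
  by (rule bump_0_eq_0[of "(t - t0) / \<delta>", THEN subst[where P = "\<lambda>x. bump_at t0 \<delta> 0 t = x"]])
    (auto simp: bump_at_def field_simps)

lemma test_tower_bump_at:
  assumes "0 < \<delta>"
  shows "test_tower (bump_at t0 \<delta>)"
proof -
  have "deriv_tower (\<lambda>k t. (1 / \<delta>) ^ k * bump k ((1 / \<delta>) * t + (- t0 / \<delta>)))"
    by (rule deriv_tower_affine_comp[OF deriv_tower_bump])
  moreover have "(1 / \<delta>) * t + (- t0 / \<delta>) = (t - t0) / \<delta>" for t
    by (simp add: diff_divide_distrib)
  ultimately have "deriv_tower (bump_at t0 \<delta>)"
    by (simp add: bump_at_def[abs_def])
  then show ?thesis
    unfolding test_tower_def using bump_at_0_eq_0[OF assms] by blast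
qed

lemma fundamental_lemma_calculus_of_variations:
  assumes f: "continuous_on UNIV f"
    and orth: "\<And>X. test_tower X \<Longrightarrow> (LINT t|lborel. f t * X 0 t) = 0"
  shows "f t0 = 0"
proof (rule ccontr)
  assume "f t0 \<noteq> 0"
  define g where "g t = f t0 * f t" for t
  have g: "continuous_on UNIV g" unfolding g_def by (intro continuous_intros f)
  have "0 < g t0" using \<open>f t0 \<noteq> 0\<close> unfolding g_def by (metis not_real_square_gt_zero)
  moreover have "isCont g t0" using g by (simp add: continuous_on_eq_continuous_at)
  ultimately obtain \<delta> where "0 < \<delta>" and \<delta>: "\<And>t. \<bar>t - t0\<bar> < \<delta> \<Longrightarrow> \<bar>g t - g t0\<bar> < g t0"
    unfolding continuous_at_eps_delta dist_real_def by metis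
  define X where "X = bump_at t0 (\<delta> / 2)"
  have X: "test_tower X" unfolding X_def by (rule test_tower_bump_at) (use \<open>0 < \<delta>\<close> in simp)
  have gX: "continuous_on UNIV (\<lambda>t. g t * X 0 t)"
    using X by (intro continuous_on_mult g deriv_tower_continuous_on[of X]) (simp add: test_tower_def)
  have nonneg: "0 \<le> g t * X 0 t" if "t \<in> {t0 - \<delta> / 2..t0 + \<delta> / 2}" for t
  proof -
    have "\<bar>t - t0\<bar> < \<delta>" using that \<open>0 < \<delta>\<close> by auto
    then have "0 < g t" using \<delta> by (force simp: abs_less_iff)
    then show ?thesis by (simp add: X_def bump_at_def bump_0_nonneg)
  qed
  have "g t0 * X 0 t0 \<noteq> 0" using \<open>0 < g t0\<close> bump_0_pos[of 0] by (simp add: X_def bump_at_def)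
  then have "integral {t0 - \<delta> / 2..t0 + \<delta> / 2} (\<lambda>t. g t * X 0 t) \<noteq> 0"
    using integral_eq_0_iff[OF continuous_on_subset[OF gX] _ nonneg] \<open>0 < \<delta>\<close> by auto
  moreover have "(LINT t|lborel. g t * X 0 t) = integral {t0 - \<delta> / 2..t0 + \<delta> / 2} (\<lambda>t. g t * X 0 t)"
    by (rule lborel_integral_vanishing_outside_Icc(2)[OF gX])
      (use bump_at_0_eq_0[of "\<delta> / 2"] \<open>0 < \<delta>\<close> in \<open>auto simp: X_def\<close>)
  moreover have "(LINT t|lborel. g t * X 0 t) = 0"
    using orth[OF X] by (simp add: g_def mult.assoc)
  ultimately show False by simp
qed

section \<open>Weak derivatives\<close>

definition unit_bump :: "nat \<Rightarrow> real \<Rightarrow> real" where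
  "unit_bump k t = bump k t / (LINT s|lborel. bump 0 s)"

lemma integral_bump_pos: "0 < (LINT s|lborel. bump 0 s)"
proof -
  have c: "continuous_on UNIV (bump 0)" by (rule deriv_tower_continuous_on[OF deriv_tower_bump])
  have "(LINT s|lborel. bump 0 s) = integral {-1..1} (bump 0)"
    by (rule lborel_integral_vanishing_outside_Icc(2)[OF c]) (use bump_0_eq_0 in auto)
  moreover have "integral {-1..1} (bump 0) \<noteq> 0"
    using integral_eq_0_iff[OF continuous_on_subset[OF c], of "-1" 1] bump_0_nonneg bump_0_pos[of 0]
    by auto
  moreover have "0 \<le> integral {-1..1} (bump 0)"
    by (intro integral_nonneg integrable_continuous_real continuous_on_subset[OF c] bump_0_nonneg) simp
  ultimately show ?thesis by linarith
qed

lemma test_tower_bump: "test_tower bump"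
  unfolding test_tower_def using deriv_tower_bump bump_0_eq_0 by blast

lemma test_tower_unit_bump: "test_tower unit_bump"
  using test_tower_lincomb[OF test_tower_bump test_tower_bump, of "1 / (LINT s|lborel. bump 0 s)" 0]
  by (simp add: unit_bump_def[abs_def])

lemma integral_unit_bump: "(LINT t|lborel. unit_bump 0 t) = 1"
  using integral_bump_pos by (simp add: unit_bump_def)

lemma test_tower_decompose:
  assumes X: "test_tower X"
  obtains Y where "test_tower Y" "\<And>k t. Y (Suc k) t = X k t - (LINT s|lborel. X 0 s) * unit_bump k t"
proof -
  define c where "c = (LINT s|lborel. X 0 s)"
  define Z where "Z k t = 1 * X k t + (- c) * unit_bump k t" for k t
  have Z: "test_tower Z"
    unfolding Z_def[abs_def] by (rule test_tower_lincomb[OF X test_tower_unit_bump])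
  have "integrable lborel (X 0)" "integrable lborel (unit_bump 0)"
    using integrable_mult_test_tower[OF X continuous_on_const, of 1 0]
      integrable_mult_test_tower[OF test_tower_unit_bump continuous_on_const, of 1 0] by simp_all
  then have "(LINT t|lborel. Z 0 t) = 0"
    using integral_unit_bump by (simp add: Z_def c_def)
  then obtain Y where "test_tower Y" "\<And>k. Y (Suc k) = Z k"
    using test_tower_antiderivative[OF Z] by metis
  then show ?thesis using that by (simp add: Z_def c_def)
qed

lemma integral_mult_test_tower_decompose:
  assumes X: "test_tower X" and g: "continuous_on UNIV g"
  obtains Y where "test_tower Y"
    "\<And>k. (LINT t|lborel. g t * X k t) = (LINT t|lborel. g t * Y (Suc k) t)
      + (LINT t|lborel. X 0 t) * (LINT t|lborel. g t * unit_bump k t)"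
proof -
  obtain Y where Y: "test_tower Y"
    and YX: "\<And>k t. Y (Suc k) t = X k t - (LINT s|lborel. X 0 s) * unit_bump k t"
    using test_tower_decompose[OF X] by metis
  have "(LINT t|lborel. g t * X k t) = (LINT t|lborel. g t * Y (Suc k) t)
      + (LINT t|lborel. X 0 t) * (LINT t|lborel. g t * unit_bump k t)" for k
  proof -
    have "(LINT t|lborel. g t * Y (Suc k) t)
        = (LINT t|lborel. g t * X k t - (LINT s|lborel. X 0 s) * (g t * unit_bump k t))"
      by (simp add: YX algebra_simps)
    also have "\<dots> = (LINT t|lborel. g t * X k t)
        - (LINT s|lborel. X 0 s) * (LINT t|lborel. g t * unit_bump k t)"
      using integrable_mult_test_tower[OF X g] integrable_mult_test_tower[OF test_tower_unit_bump g]
      by simp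
    finally show ?thesis by simp
  qed
  with Y show ?thesis using that by blast
qed

lemma weak_derivative_zero_imp_constant:
  assumes g: "continuous_on UNIV g"
    and weak: "\<And>X. test_tower X \<Longrightarrow> (LINT t|lborel. g t * X 1 t) = 0"
  shows "g t = (LINT s|lborel. g s * unit_bump 0 s)"
proof -
  define C where "C = (LINT s|lborel. g s * unit_bump 0 s)"
  have "(LINT t|lborel. (g t - C) * X 0 t) = 0" if X: "test_tower X" for X
  proof -
    obtain Y where "test_tower Y"
      and "(LINT t|lborel. g t * X 0 t) = (LINT t|lborel. g t * Y 1 t) + (LINT t|lborel. X 0 t) * C"
      using integral_mult_test_tower_decompose[OF X g] unfolding C_def by (metis One_nat_def)
    then have "(LINT t|lborel. g t * X 0 t) = (LINT t|lborel. X 0 t) * C"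
      using weak by simp
    moreover have "(LINT t|lborel. (g t - C) * X 0 t)
        = (LINT t|lborel. g t * X 0 t) - C * (LINT t|lborel. X 0 t)"
      using integrable_mult_test_tower[OF X g, of 0]
        integrable_mult_test_tower[OF X continuous_on_const, of 1 0]
      by (simp add: algebra_simps)
    ultimately show ?thesis by simp
  qed
  moreover have "continuous_on UNIV (\<lambda>t. g t - C)" by (intro continuous_intros g)
  ultimately have "g t - C = 0" by (rule fundamental_lemma_calculus_of_variations[rotated])
  then show ?thesis by (simp add: C_def)
qed

lemma weak_second_derivative_zero_imp_affine:
  assumes g: "continuous_on UNIV g"
    and weak: "\<And>X. test_tower X \<Longrightarrow> (LINT t|lborel. g t * X 2 t) = 0"
  obtains \<alpha> \<beta> where "\<And>t. g t = \<alpha> + \<beta> * t"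
proof -
  define K where "K = (LINT t|lborel. g t * unit_bump 1 t)"
  have "(LINT t|lborel. (g t + K * t) * X 1 t) = 0" if X: "test_tower X" for X
  proof -
    obtain Y where "test_tower Y"
      and "(LINT t|lborel. g t * X 1 t) = (LINT t|lborel. g t * Y 2 t) + (LINT t|lborel. X 0 t) * K"
      using integral_mult_test_tower_decompose[OF X g] unfolding K_def by (metis numeral_2_eq_2 One_nat_def)
    then have gX: "(LINT t|lborel. g t * X 1 t) = (LINT t|lborel. X 0 t) * K"
      using weak by simp
    have "(LINT t|lborel. 1 * X 0 t) = - (LINT t|lborel. t * X (Suc 0) t)"
      by (rule integration_by_parts_test_tower[OF X]) (auto intro!: derivative_eq_intros)
    then have tX: "(LINT t|lborel. X 0 t) = - (LINT t|lborel. t * X 1 t)" by simp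
    have "(LINT t|lborel. (g t + K * t) * X 1 t) = (LINT t|lborel. g t * X 1 t + K * (t * X 1 t))"
      by (simp add: distrib_right mult.assoc)
    also have "\<dots> = (LINT t|lborel. g t * X 1 t) + K * (LINT t|lborel. t * X 1 t)"
      using integrable_mult_test_tower[OF X g, of 1] integrable_mult_test_tower[OF X continuous_on_id, of 1]
      by simp
    finally show ?thesis using gX tX by simp
  qed
  moreover have "continuous_on UNIV (\<lambda>t. g t + K * t)" by (intro continuous_intros g)
  ultimately have const: "g t + K * t = (LINT s|lborel. (g s + K * s) * unit_bump 0 s)" for t
    by (rule weak_derivative_zero_imp_constant[rotated])
  have "g t = (LINT s|lborel. (g s + K * s) * unit_bump 0 s) + (- K) * t" for t
    using const[of t] by linarith
  then show ?thesis by (rule that)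
qed

lemma weak_profile_equation_integrated:
  fixes \<phi> u h :: "real \<Rightarrow> real"
  assumes D: "D \<noteq> 0" and u: "continuous_on UNIV u" and \<phi>: "continuous_on UNIV \<phi>"
    and h: "continuous_on UNIV h"
    and weak: "\<And>X. test_tower X \<Longrightarrow> - c * (LINT t|lborel. \<phi> t * X 1 t)
      = D * (LINT t|lborel. u t * X 2 t) - (LINT t|lborel. h t * X 0 t)"
  obtains v w where "\<And>t. (u has_real_derivative v t) (at t)"
    "\<And>t. (w has_real_derivative h t) (at t)" "\<And>t. D * v t = w t + c * \<phi> t"
proof -
  obtain H where H: "\<And>t. (H has_real_derivative h t) (at t)"
    using continuous_has_antiderivative[OF h] by blast
  have H_cont: "continuous_on UNIV H"
    using H by (meson DERIV_isCont continuous_at_imp_continuous_on)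
  \<comment> \<open>with \<open>P'' = (c \<phi> + H) / D\<close> the weak equation says that \<open>u - P\<close> is weakly affine\<close>
  define p where "p t = (c * \<phi> t + H t) / D" for t
  have p_cont: "continuous_on UNIV p"
    unfolding p_def using D by (intro continuous_intros \<phi> H_cont) auto
  obtain P where P: "\<And>t. (P has_real_derivative p t) (at t)"
    using continuous_has_antiderivative[OF p_cont] by blast
  have P_cont: "continuous_on UNIV P"
    using P by (meson DERIV_isCont continuous_at_imp_continuous_on)
  have "(LINT t|lborel. (u t - P t) * X 2 t) = 0" if X: "test_tower X" for X
  proof -
    have hH: "(LINT t|lborel. h t * X 0 t) = - (LINT t|lborel. H t * X 1 t)"
      using integration_by_parts_test_tower[OF X H h, of 0] by simp
    have pP: "(LINT t|lborel. p t * X 1 t) = - (LINT t|lborel. P t * X 2 t)"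
      using integration_by_parts_test_tower[OF X P p_cont, of 1] by (simp add: numeral_2_eq_2)
    have "(LINT t|lborel. p t * X 1 t)
        = (LINT t|lborel. (c / D) * (\<phi> t * X 1 t) + (1 / D) * (H t * X 1 t))"
      by (simp add: p_def add_divide_distrib algebra_simps)
    also have "\<dots> = (c / D) * (LINT t|lborel. \<phi> t * X 1 t) + (1 / D) * (LINT t|lborel. H t * X 1 t)"
      using integrable_mult_test_tower[OF X \<phi>, of 1] integrable_mult_test_tower[OF X H_cont, of 1]
      by simp
    finally have "D * (LINT t|lborel. P t * X 2 t)
        = - c * (LINT t|lborel. \<phi> t * X 1 t) - (LINT t|lborel. H t * X 1 t)"
      using D pP by (simp add: field_simps)
    then have "D * (LINT t|lborel. u t * X 2 t) = D * (LINT t|lborel. P t * X 2 t)"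
      using weak[OF X] hH by linarith
    moreover have "(LINT t|lborel. (u t - P t) * X 2 t)
        = (LINT t|lborel. u t * X 2 t) - (LINT t|lborel. P t * X 2 t)"
      using integrable_mult_test_tower[OF X u, of 2] integrable_mult_test_tower[OF X P_cont, of 2]
      by (simp add: left_diff_distrib)
    ultimately show ?thesis using D by simp
  qed
  moreover have "continuous_on UNIV (\<lambda>t. u t - P t)" by (intro continuous_intros u P_cont)
  ultimately obtain \<alpha> \<beta> where affine: "\<And>t. u t - P t = \<alpha> + \<beta> * t"
    using weak_second_derivative_zero_imp_affine[of "\<lambda>t. u t - P t"] by blast
  show ?thesis
  proof
    fix t
    have "u = (\<lambda>t. P t + \<alpha> + \<beta> * t)" using affine by (auto simp: fun_eq_iff algebra_simps)
    then show "(u has_real_derivative p t + \<beta>) (at t)"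
      using P[of t] by (auto intro!: derivative_eq_intros)
    show "((\<lambda>t. H t + D * \<beta>) has_real_derivative h t) (at t)"
      using H[of t] by (auto intro!: derivative_eq_intros)
    show "D * (p t + \<beta>) = H t + D * \<beta> + c * \<phi> t"
      using D by (simp add: p_def field_simps)
  qed
qed

section \<open>The integrated profile system\<close>

lemma filterlim_at_top_if_deriv_ge:
  fixes f f' :: "real \<Rightarrow> real"
  assumes f: "\<And>t. (f has_real_derivative f' t) (at t)"
    and "0 < \<epsilon>" and f'_ge: "\<And>t. T \<le> t \<Longrightarrow> \<epsilon> \<le> f' t"
  shows "filterlim f at_top at_top"
proof -
  have linear: "f T + \<epsilon> * (t - T) \<le> f t" if Tt: "T < t" for t
  proof -
    obtain z where "T < z" "f t - f T = (t - T) * f' z"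
      using MVT2[OF Tt, of f f'] f by blast
    moreover have "(t - T) * \<epsilon> \<le> (t - T) * f' z"
      using f'_ge[of z] \<open>T < z\<close> Tt by (intro mult_left_mono) auto
    ultimately show ?thesis by (simp add: algebra_simps)
  qed
  show ?thesis
    unfolding filterlim_at_top eventually_at_top_linorder
  proof
    fix Z
    have "Z \<le> f t" if "max (T + 1) (T + (Z - f T) / \<epsilon>) \<le> t" for t
    proof -
      have "Z - f T \<le> \<epsilon> * (t - T)" using that \<open>0 < \<epsilon>\<close> by (simp add: field_simps)
      then show ?thesis using linear[of t] that by simp
    qed
    then show "\<exists>N. \<forall>t\<ge>N. Z \<le> f t" by blast
  qed
qed

text \<open>The first order system \<open>D u' = w + c \<phi>\<close>, \<open>w' = h\<close> into which the profile equation
  integrates; \<open>u = \<phi>\<^sup>m\<close> enters only through its monotone dependence on \<open>\<phi>\<close>, and \<open>h\<close> is the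
  net reaction.\<close>

locale profile_system =
  fixes D c :: real and \<phi> u v w h :: "real \<Rightarrow> real"
  assumes D_pos: "0 < D" and c_nonneg: "0 \<le> c"
    and u_deriv: "\<And>t. (u has_real_derivative v t) (at t)"
    and w_deriv: "\<And>t. (w has_real_derivative h t) (at t)"
    and flux: "\<And>t. D * v t = w t + c * \<phi> t"
    and h_cont: "\<And>t. isCont h t"
    and \<phi>_cont: "continuous_on UNIV \<phi>"
    and \<phi>_bounded: "bounded (range \<phi>)"
    and u_bounded: "bounded (range u)"
    and u_mono: "\<And>s t. \<phi> s \<le> \<phi> t \<Longrightarrow> u s \<le> u t"
begin

lemma h_nonpos_at_interior_max:
  assumes "a < s" "s < b" and max: "\<And>t. a < t \<Longrightarrow> t < b \<Longrightarrow> \<phi> t \<le> \<phi> s"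
  shows "h s \<le> 0"
proof (rule ccontr)
  assume "\<not> h s \<le> 0"
  then obtain \<delta> where "0 < \<delta>" and \<delta>: "\<And>t. \<bar>t - s\<bar> < \<delta> \<Longrightarrow> \<bar>h t - h s\<bar> < h s"
    using h_cont[of s] unfolding continuous_at_eps_delta dist_real_def by (metis not_le)
  have h_pos: "0 < h t" if "\<bar>t - s\<bar> < \<delta>" for t
    using \<delta>[OF that] by linarith
  define e where "e = min \<delta> (s - a)"
  have e: "0 < e" "e \<le> \<delta>" "e \<le> s - a" using \<open>0 < \<delta>\<close> \<open>a < s\<close> by (auto simp: e_def)
  have "v s = 0"
  proof (rule DERIV_local_max[OF u_deriv])
    show "0 < min (s - a) (b - s)" using assms by simp
    show "\<forall>t. \<bar>s - t\<bar> < min (s - a) (b - s) \<longrightarrow> u t \<le> u s"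
      using max u_mono by (auto simp: abs_if split: if_splits)
  qed
  have v_neg: "v t < 0" if "s - e < t" "t < s" for t
  proof -
    have "w t < w s"
      by (rule DERIV_pos_imp_increasing[OF \<open>t < s\<close>]) (use w_deriv h_pos that e in force)
    moreover have "c * \<phi> t \<le> c * \<phi> s"
      using max[of t] that e c_nonneg \<open>s < b\<close> by (intro mult_left_mono) auto
    ultimately have "D * v t < D * v s" using flux[of t] flux[of s] by linarith
    then show ?thesis using \<open>v s = 0\<close> D_pos by (simp add: mult_less_0_iff)
  qed
  have "u s < u (s - e / 2)"
  proof (rule DERIV_neg_imp_decreasing_open[of "s - e / 2" s u])
    fix t assume "s - e / 2 < t" "t < s"
    then show "\<exists>y. (u has_real_derivative y) (at t) \<and> y < 0"
      using u_deriv v_neg[of t] e by auto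
  next
    show "continuous_on {s - e / 2..s} u"
      using u_deriv by (meson DERIV_isCont continuous_at_imp_continuous_on)
  qed (use e in simp)
  moreover have "u (s - e / 2) \<le> u s" using max[of "s - e / 2"] u_mono e assms by auto
  ultimately show False by simp
qed

lemma h_not_eventually_positive:
  assumes "0 < \<epsilon>" "\<And>t. T \<le> t \<Longrightarrow> \<epsilon> \<le> h t"
  shows False
proof -
  obtain B where B: "\<And>t. \<bar>\<phi> t\<bar> \<le> B" using \<phi>_bounded unfolding bounded_real by blast
  have "filterlim w at_top at_top"
    by (rule filterlim_at_top_if_deriv_ge[OF w_deriv assms])
  then have "eventually (\<lambda>t. D + c * B \<le> w t) at_top"
    by (simp add: filterlim_at_top)
  then obtain T' where T': "\<And>t. T' \<le> t \<Longrightarrow> D + c * B \<le> w t"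
    unfolding eventually_at_top_linorder by blast
  have "1 \<le> v t" if "T' \<le> t" for t
  proof -
    have "- B \<le> \<phi> t" using B[of t] by (simp add: abs_le_iff)
    then have "c * (- B) \<le> c * \<phi> t" by (rule mult_left_mono[OF _ c_nonneg])
    then have "D * 1 \<le> D * v t" using flux[of t] T'[OF that] by simp
    then show ?thesis using D_pos by simp
  qed
  then have "filterlim u at_top at_top"
    by (intro filterlim_at_top_if_deriv_ge[OF u_deriv, of 1 T']) simp_all
  moreover obtain M where M: "\<And>t. \<bar>u t\<bar> \<le> M" using u_bounded unfolding bounded_real by blast
  ultimately have "eventually (\<lambda>t. M + 1 \<le> u t) at_top"
    by (simp add: filterlim_at_top)
  then obtain N where "\<And>t. N \<le> t \<Longrightarrow> M + 1 \<le> u t"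
    unfolding eventually_at_top_linorder by blast
  then have "M + 1 \<le> u N" by simp
  with M[of N] show False by (simp add: abs_le_iff)
qed

lemma Limsup_le_level:
  assumes "0 < \<epsilon>" and h_ge: "\<And>t. T \<le> t \<Longrightarrow> l \<le> \<phi> t \<Longrightarrow> \<epsilon> \<le> h t"
  shows "Limsup at_top (\<lambda>t. ereal (\<phi> t)) \<le> ereal l"
proof (rule ccontr)
  assume Limsup_gt: "\<not> ?thesis"
  have above: "\<exists>t\<ge>T'. l < \<phi> t" for T'
  proof (rule ccontr)
    assume "\<not> (\<exists>t\<ge>T'. l < \<phi> t)"
    then have "eventually (\<lambda>t. ereal (\<phi> t) \<le> ereal l) at_top"
      unfolding eventually_at_top_linorder by (intro exI[of _ T']) (simp add: not_less)
    then show False using Limsup_gt Limsup_bounded[of "\<lambda>t. ereal (\<phi> t)"] by simp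
  qed
  show False
  proof (cases "\<exists>T'. \<forall>t\<ge>T'. l \<le> \<phi> t")
    case True
    then obtain T' where "\<And>t. T' \<le> t \<Longrightarrow> l \<le> \<phi> t" by blast
    then show False
      using h_not_eventually_positive[OF \<open>0 < \<epsilon>\<close>, of "max T T'"] h_ge by simp
  next
    case False
    then have below: "\<exists>t\<ge>T'. \<phi> t < l" for T'
      by (auto simp: not_le)
    obtain a where a: "T \<le> a" "\<phi> a < l" using below by blast
    obtain t1 where t1: "a \<le> t1" "l < \<phi> t1" using above by blast
    obtain b where b: "t1 \<le> b" "\<phi> b < l" using below by blast
    have "\<exists>s\<in>{a..b}. \<forall>t\<in>{a..b}. \<phi> t \<le> \<phi> s"
      by (rule continuous_attains_sup) (use continuous_on_subset[OF \<phi>_cont] t1 b in auto)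
    then obtain s where s: "s \<in> {a..b}" and s_max: "\<And>t. t \<in> {a..b} \<Longrightarrow> \<phi> t \<le> \<phi> s"
      by blast
    have "l < \<phi> s" using s_max[of t1] t1 b by simp
    then have "a < s" "s < b" using s a b by (auto simp: order.order_iff_strict)
    then have "h s \<le> 0" using s_max by (intro h_nonpos_at_interior_max) auto
    moreover have "\<epsilon> \<le> h s" using h_ge \<open>l < \<phi> s\<close> \<open>a < s\<close> a by simp
    ultimately show False using \<open>0 < \<epsilon>\<close> by simp
  qed
qed

lemma Liminf_ge_level:
  assumes "0 < \<epsilon>" and h_le: "\<And>t. T \<le> t \<Longrightarrow> \<phi> t \<le> l \<Longrightarrow> h t \<le> - \<epsilon>"
  shows "ereal l \<le> Liminf at_top (\<lambda>t. ereal (\<phi> t))"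
proof -
  interpret reflected: profile_system D c "\<lambda>t. - \<phi> t" "\<lambda>t. - u t" "\<lambda>t. - v t" "\<lambda>t. - w t" "\<lambda>t. - h t"
  proof unfold_locales
    show "0 < D" "0 \<le> c" using D_pos c_nonneg by simp_all
    show "((\<lambda>t. - u t) has_real_derivative - v t) (at t)" for t using u_deriv by (rule DERIV_minus)
    show "((\<lambda>t. - w t) has_real_derivative - h t) (at t)" for t using w_deriv by (rule DERIV_minus)
    show "D * - v t = - w t + c * - \<phi> t" for t using flux[of t] by simp
    show "isCont (\<lambda>t. - h t) t" for t using h_cont by (rule isCont_minus)
    show "continuous_on UNIV (\<lambda>t. - \<phi> t)" using \<phi>_cont by (rule continuous_on_minus)
    show "bounded (range (\<lambda>t. - \<phi> t))" "bounded (range (\<lambda>t. - u t))"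
      using bounded_uminus[of "range \<phi>"] bounded_uminus[of "range u"] \<phi>_bounded u_bounded
      by (simp_all add: image_image)
    show "- u s \<le> - u t" if "- \<phi> s \<le> - \<phi> t" for s t using u_mono[of t s] that by simp
  qed
  have "Limsup at_top (\<lambda>t. ereal (- \<phi> t)) \<le> ereal (- l)"
    by (rule reflected.Limsup_le_level[OF \<open>0 < \<epsilon>\<close>]) (use h_le in force)
  then show ?thesis
    using ereal_Limsup_uminus[of at_top "\<lambda>t. ereal (\<phi> t)"] by (simp add: ereal_uminus_le_reorder)
qed

end

section \<open>Bounds for wave profiles\<close>

lemma continuous_on_Icc_margin:
  fixes f :: "real \<Rightarrow> real"
  assumes f: "continuous_on {\<alpha> - \<rho>..\<beta> + \<rho>} f" and "0 < \<rho>" "\<alpha> \<le> \<beta>"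
    and gt: "\<And>s. s \<in> {\<alpha>..\<beta>} \<Longrightarrow> L < f s"
  obtains \<eta> \<epsilon> where "0 < \<eta>" "0 < \<epsilon>" "\<And>s. s \<in> {\<alpha> - \<eta>..\<beta> + \<eta>} \<Longrightarrow> L + \<epsilon> < f s"
proof -
  have "\<exists>s0\<in>{\<alpha>..\<beta>}. \<forall>s\<in>{\<alpha>..\<beta>}. f s0 \<le> f s"
    by (rule continuous_attains_inf) (use continuous_on_subset[OF f] \<open>0 < \<rho>\<close> \<open>\<alpha> \<le> \<beta>\<close> in auto)
  then obtain s0 where s0: "s0 \<in> {\<alpha>..\<beta>}" and s0_min: "\<And>s. s \<in> {\<alpha>..\<beta>} \<Longrightarrow> f s0 \<le> f s"
    by blast
  define \<epsilon> where "\<epsilon> = (f s0 - L) / 2"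
  have "0 < \<epsilon>" using gt[OF s0] by (simp add: \<epsilon>_def)
  have "uniformly_continuous_on {\<alpha> - \<rho>..\<beta> + \<rho>} f"
    by (rule compact_uniformly_continuous[OF f compact_Icc])
  then obtain \<delta> where "0 < \<delta>" and \<delta>: "\<And>x x'. x \<in> {\<alpha> - \<rho>..\<beta> + \<rho>} \<Longrightarrow> x' \<in> {\<alpha> - \<rho>..\<beta> + \<rho>}
      \<Longrightarrow> dist x' x < \<delta> \<Longrightarrow> dist (f x') (f x) < \<epsilon>"
    unfolding uniformly_continuous_on_def using \<open>0 < \<epsilon>\<close> by metis
  define \<eta> where "\<eta> = min (\<delta> / 2) \<rho>"
  have \<eta>: "0 < \<eta>" "\<eta> < \<delta>" "\<eta> \<le> \<rho>" using \<open>0 < \<delta>\<close> \<open>0 < \<rho>\<close> by (auto simp: \<eta>_def)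
  have "L + \<epsilon> < f s" if s: "s \<in> {\<alpha> - \<eta>..\<beta> + \<eta>}" for s
  proof -
    define s' where "s' = max \<alpha> (min s \<beta>)"
    have s': "s' \<in> {\<alpha>..\<beta>}" using \<open>\<alpha> \<le> \<beta>\<close> by (auto simp: s'_def)
    have "dist s s' < \<delta>"
      using s \<eta> \<open>\<alpha> \<le> \<beta>\<close> by (auto simp: s'_def dist_real_def max_def min_def)
    moreover have "s \<in> {\<alpha> - \<rho>..\<beta> + \<rho>}" "s' \<in> {\<alpha> - \<rho>..\<beta> + \<rho>}"
      using s s' \<eta> \<open>0 < \<rho>\<close> by auto
    ultimately have "dist (f s) (f s') < \<epsilon>" using \<delta> by blast
    then have "f s' - \<epsilon> < f s" by (simp add: dist_real_def abs_less_iff)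
    moreover have "f s0 \<le> f s'" by (rule s0_min[OF s'])
    moreover have "L + \<epsilon> = f s0 - \<epsilon>" by (simp add: \<epsilon>_def field_simps)
    ultimately show ?thesis by linarith
  qed
  with \<eta>(1) \<open>0 < \<epsilon>\<close> show ?thesis using that by blast
qed

lemma strict_mono_on_if_deriv_pos:
  fixes d d' :: "real \<Rightarrow> real"
  assumes d: "\<And>s. 0 \<le> s \<Longrightarrow> (d has_real_derivative d' s) (at s within {0..})"
    and pos: "\<And>s. 0 < s \<Longrightarrow> 0 < d' s"
  shows "strict_mono_on {0..} d"
proof (rule strict_mono_onI)
  fix x y :: real assume "x \<in> {0..}" "y \<in> {0..}" "x < y"
  show "d x < d y"
  proof (rule DERIV_pos_imp_increasing_open[OF \<open>x < y\<close>])
    fix z assume "x < z" "z < y"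
    then have "0 < z" using \<open>x \<in> {0..}\<close> by simp
    then have "(d has_real_derivative d' z) (at z)"
      using d[of z] at_within_interior[of z "{0..}"] by simp
    then show "\<exists>l. (d has_real_derivative l) (at z) \<and> 0 < l" using pos \<open>0 < z\<close> by blast
  next
    have "continuous_on {0..} d" by (rule DERIV_continuous_on) (use d in simp)
    then show "continuous_on {x..y} d" by (rule continuous_on_subset) (use \<open>x \<in> {0..}\<close> in auto)
  qed
qed

lemma semi_wavefront_profile_system:
  assumes sw: "semi_wavefront m D r c d b \<kappa> \<phi>" and m: "0 < m" and D: "0 < D" and c: "0 \<le> c"
    and d: "continuous_on {0..} d" and b: "continuous_on {0..} b"
  obtains v w where "profile_system D c \<phi> (\<lambda>t. \<phi> t powr m) v w (\<lambda>t. d (\<phi> t) - b (\<phi> (t - c * r)))"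
proof -
  from sw have \<phi>0: "\<And>t. 0 \<le> \<phi> t" and \<phi>: "continuous_on UNIV \<phi>" and bd: "bounded (range \<phi>)"
    and se: "solves_eq m D r c d b \<phi>"
    unfolding semi_wavefront_def by auto
  define u where "u t = \<phi> t powr m" for t
  define h where "h t = d (\<phi> t) - b (\<phi> (t - c * r))" for t
  have u_cont: "continuous_on UNIV u"
    unfolding u_def[abs_def] by (rule continuous_on_powr') (use \<phi> \<phi>0 m in auto)
  have d\<phi>: "continuous_on UNIV (\<lambda>t. d (\<phi> t))"
    by (rule continuous_on_compose2[OF d \<phi>]) (use \<phi>0 in auto)
  have "continuous_on UNIV (\<lambda>t. \<phi> (t - c * r))"
    by (rule continuous_on_compose2[OF \<phi>]) (simp_all add: continuous_on_diff)
  then have b\<phi>: "continuous_on UNIV (\<lambda>t. b (\<phi> (t - c * r)))"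
    by (rule continuous_on_compose2[OF b]) (use \<phi>0 in auto)
  have h_cont: "continuous_on UNIV h" unfolding h_def[abs_def] by (intro continuous_intros d\<phi> b\<phi>)
  have weak: "- c * (LINT t|lborel. \<phi> t * X 1 t)
      = D * (LINT t|lborel. u t * X 2 t) - (LINT t|lborel. h t * X 0 t)" if X: "test_tower X" for X
  proof -
    have "- c * (LINT t|lborel. \<phi> t * X 1 t) = D * (LINT t|lborel. u t * X 2 t)
        - (LINT t|lborel. d (\<phi> t) * X 0 t) + (LINT t|lborel. b (\<phi> (t - c * r)) * X 0 t)"
      using se[unfolded solves_eq_def, rule_format, OF test_tower_test_fun(1)[OF X]]
        test_tower_test_fun(2,3)[OF X] by (simp add: u_def)
    moreover have "(LINT t|lborel. h t * X 0 t)
        = (LINT t|lborel. d (\<phi> t) * X 0 t) - (LINT t|lborel. b (\<phi> (t - c * r)) * X 0 t)"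
      using integrable_mult_test_tower[OF X d\<phi>, of 0] integrable_mult_test_tower[OF X b\<phi>, of 0]
      by (simp add: h_def left_diff_distrib)
    ultimately show ?thesis by simp
  qed
  obtain v w where "\<And>t. (u has_real_derivative v t) (at t)" "\<And>t. (w has_real_derivative h t) (at t)"
    "\<And>t. D * v t = w t + c * \<phi> t"
    using weak_profile_equation_integrated[of D u \<phi> h c] D u_cont \<phi> h_cont weak by blast
  moreover have "bounded (range u)"
  proof -
    obtain B where B: "\<And>t. \<bar>\<phi> t\<bar> \<le> B" using bd unfolding bounded_real by blast
    have "\<bar>u t\<bar> \<le> B powr m" for t
    proof -
      have "\<phi> t powr m \<le> B powr m"
        by (rule powr_mono2) (use m \<phi>0[of t] B[of t] in auto)
      then show ?thesis by (simp add: u_def)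
    qed
    then show ?thesis unfolding bounded_real by blast
  qed
  moreover have "u s \<le> u t" if "\<phi> s \<le> \<phi> t" for s t
    using that \<phi>0 m by (simp add: u_def powr_mono2)
  moreover have "isCont h t" for t using h_cont by (simp add: continuous_on_eq_continuous_at)
  ultimately have "profile_system D c \<phi> u v w h"
    using D c \<phi> bd by unfold_locales auto
  then show ?thesis using that unfolding u_def[abs_def] h_def[abs_def] by blast
qed

lemma profile_Limsup_le:
  assumes sys: "profile_system D c \<phi> u v w (\<lambda>t. d (\<phi> t) - b (\<phi> (t - \<tau>)))"
    and \<phi>0: "\<And>t. 0 \<le> \<phi> t" and d_mono: "strict_mono_on {0..} d" and "0 \<le> \<zeta>"
    and b_le: "\<And>s. 0 \<le> s \<Longrightarrow> b s \<le> d \<zeta>"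
  shows "Limsup at_top (\<lambda>t. ereal (\<phi> t)) \<le> ereal \<zeta>"
proof (rule ccontr)
  assume "\<not> ?thesis"
  then obtain l where "ereal \<zeta> < ereal l" and l: "ereal l < Limsup at_top (\<lambda>t. ereal (\<phi> t))"
    using ereal_dense2 not_le by metis
  then have "\<zeta> < l" by simp
  have "Limsup at_top (\<lambda>t. ereal (\<phi> t)) \<le> ereal l"
  proof (rule profile_system.Limsup_le_level[OF sys, where T = 0])
    show "0 < d l - d \<zeta>"
      using strict_mono_onD[OF d_mono] \<open>0 \<le> \<zeta>\<close> \<open>\<zeta> < l\<close> by simp
    fix t assume "l \<le> \<phi> t"
    then have "d l \<le> d (\<phi> t)"
      using strict_mono_on_leD[OF d_mono] \<open>0 \<le> \<zeta>\<close> \<open>\<zeta> < l\<close> by simp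
    then show "d l - d \<zeta> \<le> d (\<phi> t) - b (\<phi> (t - \<tau>))"
      using b_le[OF \<phi>0[of "t - \<tau>"]] by linarith
  qed
  with l show False by simp
qed

lemma profile_Liminf_ge:
  assumes sys: "profile_system D c \<phi> u v w (\<lambda>t. d (\<phi> t) - b (\<phi> (t - \<tau>)))"
    and \<phi>0: "\<And>t. 0 \<le> \<phi> t"
    and b_cont: "continuous_on {0..} b" and d_cont: "continuous_on {0..} d"
    and d_mono: "mono_on {0..} d"
    and \<zeta>: "0 < \<zeta>1" "\<zeta>1 < \<zeta>2"
    and b_min: "\<And>s. s \<in> {\<zeta>1..\<zeta>2} \<Longrightarrow> b \<zeta>1 \<le> b s"
    and b_gt_d: "\<And>s. s \<in> {0<..\<zeta>1} \<Longrightarrow> d s < b s"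
    and Liminf_pos: "0 < Liminf at_top (\<lambda>t. ereal (\<phi> t))"
    and Limsup_le: "Limsup at_top (\<lambda>t. ereal (\<phi> t)) \<le> ereal \<zeta>2"
  shows "ereal \<zeta>1 \<le> Liminf at_top (\<lambda>t. ereal (\<phi> t))"
proof (rule ccontr)
  let ?L = "Liminf at_top (\<lambda>t. ereal (\<phi> t))"
  assume "\<not> ereal \<zeta>1 \<le> ?L"
  then obtain \<mu> where \<mu>: "?L = ereal \<mu>" "0 < \<mu>" "\<mu> < \<zeta>1"
    using Liminf_pos by (cases ?L) auto
  have gap: "d \<mu> < b s" if "s \<in> {\<mu>..\<zeta>2}" for s
  proof (cases "s \<le> \<zeta>1")
    case True
    then have "d s < b s" using b_gt_d that \<mu> by auto
    moreover have "d \<mu> \<le> d s" using mono_onD[OF d_mono] that \<mu> by auto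
    ultimately show ?thesis by simp
  next
    case False
    then have "d \<zeta>1 < b \<zeta>1" "b \<zeta>1 \<le> b s" using b_gt_d[of \<zeta>1] b_min[of s] that \<zeta> by auto
    moreover have "d \<mu> \<le> d \<zeta>1" using mono_onD[OF d_mono] \<mu> by auto
    ultimately show ?thesis by simp
  qed
  have "continuous_on {\<mu> - \<mu> / 2..\<zeta>2 + \<mu> / 2} b"
    by (rule continuous_on_subset[OF b_cont]) (use \<mu> in auto)
  then obtain \<eta>1 \<epsilon> where "0 < \<eta>1" "0 < \<epsilon>"
    and margin: "\<And>s. s \<in> {\<mu> - \<eta>1..\<zeta>2 + \<eta>1} \<Longrightarrow> d \<mu> + \<epsilon> < b s"
    using continuous_on_Icc_margin[of \<mu> "\<mu> / 2" \<zeta>2 b "d \<mu>"] gap \<mu> \<zeta> by auto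
  obtain \<delta> where "0 < \<delta>" and \<delta>: "\<And>x. x \<in> {0..} \<Longrightarrow> dist x \<mu> < \<delta> \<Longrightarrow> dist (d x) (d \<mu>) < \<epsilon> / 2"
    using d_cont[unfolded continuous_on_iff, rule_format, of \<mu> "\<epsilon> / 2"] \<mu> \<open>0 < \<epsilon>\<close> by auto
  define \<eta> where "\<eta> = min \<eta>1 (\<delta> / 2)"
  have \<eta>: "0 < \<eta>" "\<eta> \<le> \<eta>1" "\<eta> < \<delta>" using \<open>0 < \<eta>1\<close> \<open>0 < \<delta>\<close> by (auto simp: \<eta>_def)
  have "\<bar>d (\<mu> + \<eta>) - d \<mu>\<bar> < \<epsilon> / 2"
    using \<delta>[of "\<mu> + \<eta>"] \<eta> \<mu> by (simp add: dist_real_def)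
  then have "d (\<mu> + \<eta>) < d \<mu> + \<epsilon> / 2" unfolding abs_less_iff by linarith
  have "eventually (\<lambda>t. ereal (\<mu> - \<eta>) < ereal (\<phi> t)) at_top"
    by (rule less_LiminfD) (use \<mu> \<eta> in simp)
  moreover have "eventually (\<lambda>t. ereal (\<phi> t) < ereal (\<zeta>2 + \<eta>)) at_top"
    by (rule Limsup_lessD) (use Limsup_le \<eta> in \<open>auto intro: le_less_trans\<close>)
  ultimately have "eventually (\<lambda>t. \<mu> - \<eta> < \<phi> t \<and> \<phi> t < \<zeta>2 + \<eta>) at_top"
    by (simp add: eventually_conj_iff)
  then obtain T where T: "\<And>t. T \<le> t \<Longrightarrow> \<mu> - \<eta> < \<phi> t \<and> \<phi> t < \<zeta>2 + \<eta>"
    unfolding eventually_at_top_linorder by blast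
  have "ereal (\<mu> + \<eta>) \<le> ?L"
  proof (rule profile_system.Liminf_ge_level[OF sys, where T = "T + \<tau>"])
    show "0 < \<epsilon> / 2" using \<open>0 < \<epsilon>\<close> by simp
    fix t assume "T + \<tau> \<le> t" "\<phi> t \<le> \<mu> + \<eta>"
    have "\<phi> (t - \<tau>) \<in> {\<mu> - \<eta>1..\<zeta>2 + \<eta>1}"
      using T[of "t - \<tau>"] \<open>T + \<tau> \<le> t\<close> \<eta> by auto
    then have "d \<mu> + \<epsilon> < b (\<phi> (t - \<tau>))" by (rule margin)
    moreover have "d (\<phi> t) \<le> d (\<mu> + \<eta>)"
      using mono_onD[OF d_mono] \<phi>0[of t] \<open>\<phi> t \<le> \<mu> + \<eta>\<close> \<mu> \<eta> by auto
    ultimately show "d (\<phi> t) - b (\<phi> (t - \<tau>)) \<le> - (\<epsilon> / 2)"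
      using \<open>d (\<mu> + \<eta>) < d \<mu> + \<epsilon> / 2\<close> by linarith
  qed
  then show False using \<mu> \<eta> by simp
qed

theorem lemma3p3:
  fixes m D r c \<zeta>1 \<zeta>2 \<kappa> b0 :: real
    and d d1 d2 b \<phi> :: "real \<Rightarrow> real"
  assumes m: "m > 1" and D: "D > 0" and r: "r \<ge> 0" and c: "c > 0"
    and d_C2: "\<And>s. s \<ge> 0 \<Longrightarrow> (d has_real_derivative d1 s) (at s within {0..})"
              "\<And>s. s \<ge> 0 \<Longrightarrow> (d1 has_real_derivative d2 s) (at s within {0..})"
              "continuous_on {0..} d2"
    and d0: "d 0 = 0"
    and d1_pos: "\<And>s. s > 0 \<Longrightarrow> d1 s > 0"
    and d2_nonneg: "\<And>s. s > 0 \<Longrightarrow> d2 s \<ge> 0"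
    and b_cont: "continuous_on {0..} b"
    and b_nonneg: "\<And>s. s \<ge> 0 \<Longrightarrow> b s \<ge> 0"
    and zeta: "0 < \<zeta>1" "\<zeta>1 < \<zeta>2"
    and H1a: "\<And>s. s \<in> {\<zeta>1..\<zeta>2} \<Longrightarrow> d \<zeta>1 \<le> b s \<and> b s \<le> d \<zeta>2"
    and H1b: "\<And>s. s \<in> {0..\<zeta>1} \<Longrightarrow> 0 \<le> b s \<and> b s \<le> d \<zeta>2"
    and H2: "\<And>s. s \<in> {\<zeta>1..\<zeta>2} \<Longrightarrow> b \<zeta>1 \<le> b s"
    and H3a: "\<And>s. s \<in> {0<..\<zeta>1} \<Longrightarrow> b s > d s"
    and H3b: "(b has_real_derivative b0) (at 0 within {0..})" "b0 > d1 0"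
    and H4: "{s \<in> {0..\<zeta>2}. b s = d s} = {0, \<kappa>}" "\<kappa> \<noteq> 0"
    and bsup: "\<And>s. s \<ge> 0 \<Longrightarrow> b s \<le> d \<zeta>2"
    and wave: "semi_wavefront m D r c d b \<kappa> \<phi> \<or> wavefront m D r c d b \<kappa> \<phi>"
  shows "0 < ereal \<zeta>1 \<and>
         ereal \<zeta>1 \<le> Liminf at_top (\<lambda>t. ereal (\<phi> t)) \<and>
         Liminf at_top (\<lambda>t. ereal (\<phi> t)) \<le> Limsup at_top (\<lambda>t. ereal (\<phi> t)) \<and>
         Limsup at_top (\<lambda>t. ereal (\<phi> t)) \<le> ereal \<zeta>2 \<and>
         ereal \<zeta>2 < \<infinity>"
proof -
  have sw: "semi_wavefront m D r c d b \<kappa> \<phi>" using wave by (auto simp: wavefront_def)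
  then have \<phi>0: "\<And>t. 0 \<le> \<phi> t" and Liminf_pos: "0 < Liminf at_top (\<lambda>t. ereal (\<phi> t))"
    and Liminf_le_Limsup: "Liminf at_top (\<lambda>t. ereal (\<phi> t)) \<le> Limsup at_top (\<lambda>t. ereal (\<phi> t))"
    unfolding semi_wavefront_def by auto
  have d_mono: "strict_mono_on {0..} d" by (rule strict_mono_on_if_deriv_pos[OF d_C2(1) d1_pos])
  have d_cont: "continuous_on {0..} d" by (rule DERIV_continuous_on) (use d_C2(1) in simp)
  obtain v w where sys: "profile_system D c \<phi> (\<lambda>t. \<phi> t powr m) v w (\<lambda>t. d (\<phi> t) - b (\<phi> (t - c * r)))"
    using semi_wavefront_profile_system[OF sw _ D _ d_cont b_cont] m c by force
  have upper: "Limsup at_top (\<lambda>t. ereal (\<phi> t)) \<le> ereal \<zeta>2"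
    by (rule profile_Limsup_le[OF sys \<phi>0 d_mono]) (use zeta bsup in auto)
  have "ereal \<zeta>1 \<le> Liminf at_top (\<lambda>t. ereal (\<phi> t))"
    by (rule profile_Liminf_ge[OF sys \<phi>0 b_cont d_cont strict_mono_on_imp_mono_on[OF d_mono]
          zeta H2 H3a Liminf_pos upper])
  with zeta upper Liminf_le_Limsup show ?thesis by simp
qed

end
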